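(* Let $\ell$ be a nondegenerate Hermitian form on a complex $n$-dimensional space $W$, $A$ an $\ell$-self-adjoint antilinear operator, and $\lambda^2>0$ an eigenvalue of $A^2$. Let $s_1$ be the least positive integer with $\ker(A^2-\lambda^2I)^{s_1}=\ker(A^2-\lambda^2I)^{n}$. Then there is an $s_1$-dimensional $A$-invariant subspace $V\subset\ker(A^2-\lambda^2I)^n$ on which $\ell$ is nondegenerate, and a basis of $V$ with respect to which $\ell|_V$ and $A|_V$ are represented by $\pm S_{s_1}$ and $J_{|\lambda|,s_1}$ respectively.
   Context: An antilinear operator satisfies $A(zv+w)=\bar zAv+Aw$; $\ell$ is linear in the first argument and conjugate-linear in the second; $A$ is $\ell$-self-adjoint if $\ell(Av,w)=\ell(Aw,v)$. In a basis $e_1,\dots,e_k$, $\ell$ is represented by $H_{i,j}=\ell(e_j,e_i)$ and $A$ by $C$ with $Ae_i=\sum_m C_{m,i}e_m$. $S_k$ has $(i,j)$ entry $1$ if $i+j=k+1$, else $0$; $J_{\mu,k}=\mu I_k+T_k$ with $T_k$ having $(i,j)$ entry $1$ if $j-i=1$, else $0$. *)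

theory Defs
  imports "HOL-Analysis.Analysis"
begin

text \<open>The complex n-dimensional space W is modelled as complex^'n, n = CARD('n).\<close>

definition sesquilinear :: "(complex^'n \<Rightarrow> complex^'n \<Rightarrow> complex) \<Rightarrow> bool" where
  "sesquilinear l \<longleftrightarrow>
     (\<forall>z v w u. l (z *s v + w) u = z * l v u + l w u) \<and>
     (\<forall>z v w u. l u (z *s v + w) = cnj z * l u v + l u w)"

definition hermitian_form :: "(complex^'n \<Rightarrow> complex^'n \<Rightarrow> complex) \<Rightarrow> bool" where
  "hermitian_form l \<longleftrightarrow> sesquilinear l \<and> (\<forall>v w. l w v = cnj (l v w))"

definition nondegenerate_on :: "(complex^'n \<Rightarrow> complex^'n \<Rightarrow> complex) \<Rightarrow> (complex^'n) set \<Rightarrow> bool" where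
  "nondegenerate_on l V \<longleftrightarrow> (\<forall>v\<in>V. (\<forall>w\<in>V. l v w = 0) \<longrightarrow> v = 0)"

definition antilinear :: "(complex^'n \<Rightarrow> complex^'n) \<Rightarrow> bool" where
  "antilinear A \<longleftrightarrow> (\<forall>z v w. A (z *s v + w) = cnj z *s A v + A w)"

definition l_self_adjoint :: "(complex^'n \<Rightarrow> complex^'n \<Rightarrow> complex) \<Rightarrow> (complex^'n \<Rightarrow> complex^'n) \<Rightarrow> bool" where
  "l_self_adjoint l A \<longleftrightarrow> (\<forall>v w. l (A v) w = l (A w) v)"

definition gen_ker :: "(complex^'n \<Rightarrow> complex^'n) \<Rightarrow> complex \<Rightarrow> nat \<Rightarrow> (complex^'n) set" where
  "gen_ker A c k = {v. ((\<lambda>x. A (A x) - c *s x) ^^ k) v = 0}"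

definition cspan_list :: "nat \<Rightarrow> (nat \<Rightarrow> complex^'n) \<Rightarrow> (complex^'n) set" where
  "cspan_list s e = {v. \<exists>c. v = (\<Sum>i=1..s. c i *s e i)}"

definition cindependent_list :: "nat \<Rightarrow> (nat \<Rightarrow> complex^'n) \<Rightarrow> bool" where
  "cindependent_list s e \<longleftrightarrow> (\<forall>c. (\<Sum>i=1..s. c i *s e i) = 0 \<longrightarrow> (\<forall>i\<in>{1..s}. c i = 0))"

text \<open>S_k and J_{mu,k}, as functions of (row, column), indices 1..k\<close>
definition S_mat :: "nat \<Rightarrow> nat \<Rightarrow> nat \<Rightarrow> complex" where
  "S_mat k i j = (if i + j = k + 1 then 1 else 0)"

definition T_mat :: "nat \<Rightarrow> nat \<Rightarrow> nat \<Rightarrow> complex" where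
  "T_mat k i j = (if int j - int i = 1 then 1 else 0)"

definition J_mat :: "complex \<Rightarrow> nat \<Rightarrow> nat \<Rightarrow> nat \<Rightarrow> complex" where
  "J_mat \<mu> k i j = (if i = j then \<mu> else 0) + T_mat k i j"

end

theory Submission
  imports Defs
begin

text \<open>Put \<mu> = |\<lambda>|, T = A - \<mu> and P = A + \<mu>. These maps are only real-linear, but they
  commute, N = A^2 - \<mu>^2 = T P is complex-linear and T (i z) = - i P z; hence
  ker N^s = ker T^s + i ker T^s. Self-adjointness of A makes l real-valued and T l-symmetric
  on T-nilpotent vectors. By the Fitting decomposition, l is nondegenerate on the generalized
  eigenspace, and polarization yields u \<in> ker T^s1 with l (T^(s1 - 1) u) u \<noteq> 0. Successive
  real shears u \<mapsto> u + r T^d u followed by a rescaling make l (T^k u) u equal to \<plusminus>1 for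
  k = s1 - 1 and to 0 otherwise, and then e i = T^(s1 - i) u is the required basis.\<close>

section \<open>Iterates of linear maps\<close>

lemma funpow_commute:
  assumes "\<And>v. f (g v) = g (f v)"
  shows "(f^^j) ((g^^k) v) = (g^^k) ((f^^j) v)"
proof -
  have "f ((g^^k) v) = (g^^k) (f v)" for v
    by (induction k) (simp_all add: assms)
  then show ?thesis by (induction j) simp_all
qed

lemma funpow_kernel_mono:
  fixes f :: "'a::zero \<Rightarrow> 'a"
  assumes "f 0 = 0" and "a \<le> b" and "(f^^a) v = 0"
  shows "(f^^b) v = 0"
proof -
  have "(f^^c) 0 = 0" for c by (induction c) (simp_all add: assms(1))
  moreover have "(f^^b) v = (f^^(b - a)) ((f^^a) v)"
    using assms(2) by (metis funpow_add le_add_diff_inverse2 o_apply)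
  ultimately show ?thesis using assms(3) by simp
qed

lemma funpow_kernel_stable:
  fixes f :: "'a::zero \<Rightarrow> 'a"
  assumes stable: "\<forall>v. (f^^Suc k) v = 0 \<longrightarrow> (f^^k) v = 0" and "(f^^(k + j)) v = 0"
  shows "(f^^k) v = 0"
  using assms(2)
proof (induction j arbitrary: v)
  case 0
  then show ?case by simp
next
  case (Suc j)
  then have "(f^^(k + j)) (f v) = 0" by (simp add: funpow_swap1)
  then have "(f^^Suc k) v = 0" using Suc.IH by (simp add: funpow_Suc_right del: funpow.simps)
  then show ?case using stable by blast
qed

lemma linear_funpow: "linear (f :: 'a::real_vector \<Rightarrow> 'a) \<Longrightarrow> linear (f^^k)"
  by (induction k) (simp_all add: linear_id linear_compose)

lemma vec_linear_funpow:
  fixes f :: "'a::field^'n \<Rightarrow> 'a^'n"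
  shows "Vector_Spaces.linear (*s) (*s) f \<Longrightarrow> Vector_Spaces.linear (*s) (*s) (f^^k)"
  by (induction k) (simp_all add: vec.linear_id Vector_Spaces.linear_compose)

lemma scaleR_vec_eq_scale: "r *\<^sub>R (x :: 'a::real_algebra_1^'n) = of_real r *s x"
  by (vector scaleR_conv_of_real)

lemma kernel_funpow_stabilizes:
  fixes f :: "'a::field^'n \<Rightarrow> 'a^'n"
  assumes lin: "Vector_Spaces.linear (*s) (*s) f"
  shows "\<exists>k\<le>CARD('n). \<forall>v. (f^^Suc k) v = 0 \<longrightarrow> (f^^k) v = 0"
proof (rule ccontr)
  assume grows: "\<not> ?thesis"
  define K where "K j = {v. (f^^j) v = 0}" for j
  have subspace: "vec.subspace (K j)" for j
    unfolding K_def by (rule vec.linear_subspace_kernel[OF vec_linear_funpow[OF lin]])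
  have "j \<le> vec.dim (K j)" if "j \<le> Suc CARD('n)" for j
    using that
  proof (induction j)
    case 0
    then show ?case by simp
  next
    case (Suc j)
    from grows Suc.prems obtain v where "(f^^Suc j) v = 0" "(f^^j) v \<noteq> 0" by auto
    then have "v \<in> K (Suc j) - K j" unfolding K_def by simp
    moreover have "K j \<subseteq> K (Suc j)"
      unfolding K_def using funpow_kernel_mono[of f, OF vec.linear_0[OF lin], of j "Suc j"] by auto
    ultimately have "vec.span (K j) \<subset> vec.span (K (Suc j))"
      using subspace by (auto simp: vec.span_eq_iff[THEN iffD2])
    then have "vec.dim (K j) < vec.dim (K (Suc j))" by (rule vec.dim_psubset)
    then show ?case using Suc by simp
  qed
  moreover have "vec.dim (K (Suc CARD('n))) \<le> CARD('n)"
    using vec.dim_subset[of "K (Suc CARD('n))" UNIV] vec_dim_card[where 'a='a and 'n='n] by simp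
  ultimately show False by fastforce
qed

lemma kernel_funpow_subset_card:
  fixes f :: "'a::field^'n \<Rightarrow> 'a^'n"
  assumes lin: "Vector_Spaces.linear (*s) (*s) f" and "(f^^m) v = 0"
  shows "(f^^CARD('n)) v = 0"
proof -
  obtain k where k: "k \<le> CARD('n)" "\<forall>v. (f^^Suc k) v = 0 \<longrightarrow> (f^^k) v = 0"
    using kernel_funpow_stabilizes[OF lin] by blast
  have "(f^^(k + m)) v = 0"
    using funpow_kernel_mono[of f, OF vec.linear_0[OF lin] _ assms(2)] by simp
  then have "(f^^k) v = 0" by (rule funpow_kernel_stable[OF k(2)])
  then show ?thesis using funpow_kernel_mono[of f, OF vec.linear_0[OF lin] k(1)] by blast
qed

lemma least_stable_kernel_index:
  fixes f :: "'a::field^'n \<Rightarrow> 'a^'n"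
  assumes lin: "Vector_Spaces.linear (*s) (*s) f" and eigen: "f v = 0" "v \<noteq> 0"
  defines "s \<equiv> LEAST s. 0 < s \<and> {v. (f^^s) v = 0} = {v. (f^^CARD('n)) v = 0}"
  shows "0 < s" and "(f^^s) x = 0 \<longleftrightarrow> (f^^CARD('n)) x = 0"
    and "\<exists>w. (f^^s) w = 0 \<and> (f^^(s - 1)) w \<noteq> 0"
proof -
  have "0 < CARD('n) \<and> {v. (f^^CARD('n)) v = 0} = {v. (f^^CARD('n)) v = 0}" by simp
  then have s: "0 < s \<and> {v. (f^^s) v = 0} = {v. (f^^CARD('n)) v = 0}"
    unfolding s_def by (rule LeastI)
  then show "0 < s" and "(f^^s) x = 0 \<longleftrightarrow> (f^^CARD('n)) x = 0" by auto
  show "\<exists>w. (f^^s) w = 0 \<and> (f^^(s - 1)) w \<noteq> 0"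
  proof (cases "s = 1")
    case True
    then show ?thesis using eigen by auto
  next
    case False
    then have "\<not> (0 < s - 1 \<and> {v. (f^^(s - 1)) v = 0} = {v. (f^^CARD('n)) v = 0})"
      using s unfolding s_def by (intro not_less_Least) auto
    moreover have "{v. (f^^(s - 1)) v = 0} \<subseteq> {v. (f^^CARD('n)) v = 0}"
      using kernel_funpow_subset_card[OF lin] by blast
    ultimately show ?thesis using False s by auto
  qed
qed

lemma fitting_decomposition:
  fixes g :: "'a::field^'n \<Rightarrow> 'a^'n"
  assumes lin: "Vector_Spaces.linear (*s) (*s) g" and stable: "\<And>v. g (g v) = 0 \<Longrightarrow> g v = 0"
  shows "\<exists>y z. x = y + g z \<and> g y = 0"
proof -
  have range_subspace: "vec.subspace (range g)"
    by (rule vec.linear_subspace_image[OF lin vec.subspace_UNIV])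
  have "inj_on g (range g)"
  proof (rule inj_onI)
    fix x y assume "x \<in> range g" "y \<in> range g" "g x = g y"
    then obtain a b where "x = g a" "y = g b" "g (g (a - b)) = 0"
      by (auto simp: vec.linear_diff[OF lin])
    then show "x = y" using stable[of "a - b"] by (simp add: vec.linear_diff[OF lin])
  qed
  then have "vec.dim (g ` range g) = vec.dim (range g)"
    using range_subspace by (simp add: vec.dim_image_eq[OF lin] vec.span_eq_iff[THEN iffD2])
  moreover have "vec.subspace (g ` range g)"
    by (rule vec.linear_subspace_image[OF lin range_subspace])
  moreover have "g ` range g \<subseteq> range g" by auto
  ultimately have "g ` range g = range g"
    using range_subspace vec.subspace_dim_equal by (metis order_refl)
  then have "g x \<in> g ` range g" by simp
  then obtain z where "g x = g (g z)" by auto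
  then show ?thesis
    by (intro exI[of _ "x - g z"] exI[of _ z]) (simp add: vec.linear_diff[OF lin])
qed

lemma cspan_list_mem:
  assumes "j \<in> {1..s}"
  shows "e j \<in> cspan_list s e"
proof -
  have "(\<Sum>i=1..s. (if i = j then 1 else 0) *s e i) = (\<Sum>i=1..s. if i = j then e i else 0)"
    by (rule sum.cong) auto
  also have "\<dots> = e j" using assms by simp
  finally have "e j = (\<Sum>i=1..s. (if i = j then 1 else 0) *s e i)" ..
  then show ?thesis
    unfolding cspan_list_def by (intro CollectI exI[of _ "\<lambda>i. if i = j then 1 else 0"])
qed

lemma cspan_list_matrix_combination:
  "(\<Sum>i=1..s. c i *s (\<Sum>m=1..s. M m i *s e m)) \<in> cspan_list s e"
proof -
  have "(\<Sum>i=1..s. c i *s (\<Sum>m=1..s. M m i *s e m)) = (\<Sum>i=1..s. \<Sum>m=1..s. (c i * M m i) *s e m)"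
    by (simp add: vec.scale_sum_right)
  also have "\<dots> = (\<Sum>m=1..s. \<Sum>i=1..s. (c i * M m i) *s e m)"
    by (rule sum.swap)
  also have "\<dots> = (\<Sum>m=1..s. (\<Sum>i=1..s. c i * M m i) *s e m)"
    by (simp add: vec.scale_sum_left)
  finally show ?thesis
    unfolding cspan_list_def by (intro CollectI exI[of _ "\<lambda>m. \<Sum>i=1..s. c i * M m i"])
qed

lemma sum_J_mat_column:
  assumes "i \<in> {1..s}"
  shows "(\<Sum>m=1..s. J_mat \<mu> s m i *s e m) = \<mu> *s e i + (if i = 1 then 0 else e (i - 1))"
proof -
  have "(\<Sum>m=1..s. J_mat \<mu> s m i *s e m)
      = (\<Sum>m=1..s. if m = i then \<mu> *s e m else 0) + (\<Sum>m=1..s. T_mat s m i *s e m)"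
    by (simp add: J_mat_def vec.scale_left_distrib sum.distrib if_distrib[of "\<lambda>c. c *s _"]
        cong: if_cong)
  also have "(\<Sum>m=1..s. if m = i then \<mu> *s e m else 0) = \<mu> *s e i"
    using assms by simp
  also have "(\<Sum>m=1..s. T_mat s m i *s e m) = (\<Sum>m=1..s. if m = i - 1 \<and> i \<noteq> 1 then e m else 0)"
    using assms by (intro sum.cong) (auto simp: T_mat_def)
  also have "\<dots> = (if i = 1 then 0 else e (i - 1))"
    using assms by (auto simp: sum.delta)
  finally show ?thesis .
qed

section \<open>The real-linear factors of A^2 - \<mu>^2\<close>

locale antilinear_self_adjoint =
  fixes l :: "complex^'n \<Rightarrow> complex^'n \<Rightarrow> complex"
    and A :: "complex^'n \<Rightarrow> complex^'n"
    and \<mu> :: real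
  assumes l_hermitian: "hermitian_form l"
    and A_antilinear: "antilinear A"
    and A_self_adjoint: "l_self_adjoint l A"
    and \<mu>_pos: "0 < \<mu>"
begin

lemma l_linear_left: "l (z *s v + w) u = z * l v u + l w u"
  using l_hermitian unfolding hermitian_form_def sesquilinear_def by blast

lemma l_antilinear_right: "l u (z *s v + w) = cnj z * l u v + l u w"
  using l_hermitian unfolding hermitian_form_def sesquilinear_def by blast

lemma l_cnj: "cnj (l v w) = l w v"
  using l_hermitian unfolding hermitian_form_def by metis

lemma l_add_left: "l (v + w) u = l v u + l w u"
  using l_linear_left[of 1] by simp

lemma l_add_right: "l u (v + w) = l u v + l u w"
  using l_antilinear_right[of _ 1] by simp

lemma l_scale_left: "l (z *s v) u = z * l v u"
  using l_linear_left[of z v 0] l_add_left[of 0 0] by simp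

lemma l_scale_right: "l u (z *s v) = cnj z * l u v"
  using l_antilinear_right[of _ z v 0] l_add_right[of _ 0 0] by simp

lemma l_zero_left [simp]: "l 0 u = 0"
  using l_scale_left[of 0 0] by simp

lemma l_zero_right [simp]: "l u 0 = 0"
  using l_scale_right[of _ 0 0] by simp

lemma l_diff_left: "l (v - w) u = l v u - l w u"
  using l_add_left[of "v - w" w] by simp

lemma l_diff_right: "l u (v - w) = l u v - l u w"
  using l_add_right[of _ "v - w" w] by simp

lemma l_scaleR_left: "l (r *\<^sub>R v) u = of_real r * l v u"
  by (simp add: scaleR_vec_eq_scale l_scale_left)

lemma l_scaleR_right: "l u (r *\<^sub>R v) = of_real r * l u v"
  by (simp add: scaleR_vec_eq_scale l_scale_right)

lemma l_sum_left: "finite S \<Longrightarrow> l (\<Sum>i\<in>S. c i *s e i) w = (\<Sum>i\<in>S. c i * l (e i) w)"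
  by (induction S rule: finite_induct) (simp_all add: l_add_left l_scale_left)

lemma l_A_swap: "l (A v) w = l (A w) v"
  using A_self_adjoint unfolding l_self_adjoint_def by blast

lemma A_semilinear: "A (z *s v + w) = cnj z *s A v + A w"
  using A_antilinear unfolding antilinear_def by blast

lemma A_add: "A (v + w) = A v + A w"
  using A_semilinear[of 1] by simp

lemma A_zero [simp]: "A 0 = 0"
  using A_add[of 0 0] by simp

lemma A_scale: "A (z *s v) = cnj z *s A v"
  using A_semilinear[of z v 0] by simp

lemma A_diff: "A (v - w) = A v - A w"
  using A_add[of "v - w" w] by simp

lemma A_scaleR: "A (r *\<^sub>R v) = r *\<^sub>R A v"
  by (simp add: scaleR_vec_eq_scale A_scale)

lemma A_sum: "finite S \<Longrightarrow> A (\<Sum>i\<in>S. c i *s e i) = (\<Sum>i\<in>S. cnj (c i) *s A (e i))"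
  by (induction S rule: finite_induct) (simp_all add: A_add A_scale)

definition T :: "complex^'n \<Rightarrow> complex^'n" where
  "T v = A v - \<mu> *\<^sub>R v"

definition P :: "complex^'n \<Rightarrow> complex^'n" where
  "P v = A v + \<mu> *\<^sub>R v"

definition N :: "complex^'n \<Rightarrow> complex^'n" where
  "N v = A (A v) - complex_of_real (\<mu>\<^sup>2) *s v"

lemma gen_ker_eq_kernel_N: "gen_ker A (complex_of_real (\<mu>\<^sup>2)) k = {v. (N^^k) v = 0}"
  unfolding gen_ker_def N_def[abs_def] ..

lemma linear_T: "linear T"
  by (rule linearI) (simp_all add: T_def A_add A_scaleR algebra_simps)

lemma linear_P: "linear P"
  by (rule linearI) (simp_all add: P_def A_add A_scaleR algebra_simps)

lemma linear_N: "Vector_Spaces.linear (*s) (*s) N"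
  unfolding Vector_Spaces.linear_iff
  by (simp add: vec.vector_space_axioms N_def A_add A_scale algebra_simps vec.scale_right_distrib)

lemmas linear_T_funpow = linear_funpow[OF linear_T]
lemmas linear_P_funpow = linear_funpow[OF linear_P]

lemma T_P_eq_N: "T (P v) = N v"
  by (simp add: T_def P_def N_def A_add A_diff A_scale scaleR_vec_eq_scale algebra_simps
      power2_eq_square)

lemma P_T_eq_N: "P (T v) = N v"
  by (simp add: T_def P_def N_def A_add A_diff A_scale scaleR_vec_eq_scale algebra_simps
      power2_eq_square)

lemma T_P_commute: "T (P v) = P (T v)"
  by (simp add: T_P_eq_N P_T_eq_N)

lemmas T_funpow_P_funpow_commute = funpow_commute[of T P, OF T_P_commute]

lemma T_P_funpow_commute: "T ((P^^k) v) = (P^^k) (T v)"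
  using T_funpow_P_funpow_commute[of 1 k v] by simp

lemma N_funpow_eq_T_P: "(N^^k) v = (T^^k) ((P^^k) v)"
proof (induction k arbitrary: v)
  case 0
  then show ?case by simp
next
  case (Suc k)
  have "(N^^Suc k) v = (T^^k) ((P^^k) (T (P v)))"
    by (simp only: funpow_Suc_right o_apply Suc T_P_eq_N)
  also have "(P^^k) (T (P v)) = T ((P^^k) (P v))"
    by (simp add: T_P_funpow_commute)
  finally show ?case by (simp only: funpow_Suc_right o_apply)
qed

lemma N_funpow_eq_P_T: "(N^^k) v = (P^^k) ((T^^k) v)"
  by (simp only: N_funpow_eq_T_P T_funpow_P_funpow_commute)

lemma P_minus_T: "P x - T x = (2 * \<mu>) *\<^sub>R x"
  unfolding P_def T_def scaleR_vec_eq_scale by (vector algebra_simps)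

lemma T_funpow_mult_i: "(T^^k) (\<i> *s z) = (\<i> * (-1)^k) *s (P^^k) z"
proof (induction k arbitrary: z)
  case 0
  then show ?case by simp
next
  case (Suc k)
  have "T (\<i> *s z) = \<i> *s - P z"
    unfolding T_def P_def A_scale scaleR_vec_eq_scale by (vector algebra_simps)
  then have "(T^^Suc k) (\<i> *s z) = (\<i> * (-1)^k) *s (P^^k) (- P z)"
    by (simp only: funpow_Suc_right o_apply Suc)
  then show ?case
    by (simp only: funpow_Suc_right o_apply linear_neg[OF linear_P_funpow]) simp
qed

lemma P_funpow_on_kernel_T:
  assumes "T t = 0"
  shows "(P^^m) t = ((2 * \<mu>) ^ m) *\<^sub>R t"
proof (induction m)
  case 0
  then show ?case by simp
next
  case (Suc m)
  have "P t = (2 * \<mu>) *\<^sub>R t" using P_minus_T[of t] assms by simp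
  then show ?case by (simp add: Suc.IH linear_scale[OF linear_P])
qed

lemma N_funpow_on_kernel_T:
  assumes "(T^^s) a = 0" and "1 \<le> s"
  shows "(N^^(s - 1)) a = ((2 * \<mu>) ^ (s - 1)) *\<^sub>R (T^^(s - 1)) a"
proof -
  have "T ((T^^(s - 1)) a) = 0" using assms by (cases s) auto
  then show ?thesis by (simp add: N_funpow_eq_P_T P_funpow_on_kernel_T)
qed

subsection \<open>Symmetry on T-nilpotent vectors\<close>

lemma l_T_swap: "l (T x) y + of_real \<mu> * l x y = l (T y) x + of_real \<mu> * l y x"
  using l_A_swap[of x y] by (simp add: T_def l_diff_left l_scaleR_left)

lemma l_skew_part_recursion:
  "of_real (2 * \<mu>) * (l x y - l y x) = - (l (T x) y - l y (T x)) - (l x (T y) - l (T y) x)"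
proof -
  have swap: "l (T x) y + of_real \<mu> * l x y = l (T y) x + of_real \<mu> * l y x"
    by (rule l_T_swap)
  then have "cnj (l (T x) y + of_real \<mu> * l x y) = cnj (l (T y) x + of_real \<mu> * l y x)"
    by simp
  then have "l y (T x) + of_real \<mu> * l y x = l x (T y) + of_real \<mu> * l x y"
    by (simp only: complex_cnj_add complex_cnj_mult complex_cnj_complex_of_real l_cnj)
  with swap show ?thesis unfolding of_real_mult of_real_numeral by algebra
qed

lemma l_symmetric_on_T_kernels:
  assumes "(T^^j) x = 0" and "(T^^k) y = 0"
  shows "l x y = l y x"
  using assms
proof (induction "j + k" arbitrary: j k x y rule: less_induct)
  case less
  show ?case
  proof (cases "j = 0 \<or> k = 0")
    case True
    then show ?thesis using less.prems by auto
  next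
    case False
    then obtain j' k' where j: "j = Suc j'" and k: "k = Suc k'"
      by (metis not0_implies_Suc)
    have "l (T x) y = l y (T x)"
      using less.hyps[of j' k "T x" y] less.prems j by (simp add: funpow_swap1)
    moreover have "l x (T y) = l (T y) x"
      using less.hyps[of j k' x "T y"] less.prems k by (simp add: funpow_swap1)
    ultimately have "of_real (2 * \<mu>) * (l x y - l y x) = 0"
      using l_skew_part_recursion[of x y] by simp
    then show ?thesis using \<mu>_pos by simp
  qed
qed

definition T_nilpotent :: "complex^'n \<Rightarrow> bool" where
  "T_nilpotent x \<longleftrightarrow> (\<exists>j. (T^^j) x = 0)"

lemma T_nilpotentI: "(T^^j) x = 0 \<Longrightarrow> T_nilpotent x"
  unfolding T_nilpotent_def by blast

lemma T_nilpotent_funpow: "T_nilpotent x \<Longrightarrow> T_nilpotent ((T^^k) x)"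
  unfolding T_nilpotent_def
  by (metis funpow_add o_apply add.commute linear_0[OF linear_T_funpow])

lemma l_symmetric_on_T_nilpotent: "T_nilpotent x \<Longrightarrow> T_nilpotent y \<Longrightarrow> l x y = l y x"
  unfolding T_nilpotent_def using l_symmetric_on_T_kernels by blast

lemma T_funpow_symmetric:
  assumes "T_nilpotent x" and "T_nilpotent y"
  shows "l ((T^^k) x) y = l x ((T^^k) y)"
  using assms(2)
proof (induction k arbitrary: y)
  case 0
  then show ?case by simp
next
  case (Suc k)
  have Ty: "T_nilpotent (T y)" using T_nilpotent_funpow[OF Suc.prems, of 1] by simp
  have "l ((T^^Suc k) x) y = l (T ((T^^k) x)) y" by simp
  also have "\<dots> = l ((T^^k) x) (T y)"
    using l_T_swap[of "(T^^k) x" y] l_symmetric_on_T_nilpotent[of "(T^^k) x" y]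
      l_symmetric_on_T_nilpotent[of "T y" "(T^^k) x"] T_nilpotent_funpow[OF assms(1)] Suc.prems Ty
    by simp
  also have "\<dots> = l x ((T^^Suc k) y)"
    using Suc.IH[OF Ty] by (simp add: funpow_swap1)
  finally show ?case .
qed

subsection \<open>The generalized eigenspace\<close>

text \<open>Since P - T = 2\<mu>, a vector x is (P x - T x) / 2\<mu>; split P x and T x by induction.\<close>

lemma kernel_T_P_split:
  assumes "(T^^j) ((P^^k) x) = 0"
  shows "\<exists>a b. x = a + b \<and> (T^^j) a = 0 \<and> (P^^k) b = 0"
  using assms
proof (induction "j + k" arbitrary: j k x rule: less_induct)
  case less
  show ?case
  proof (cases "j = 0 \<or> k = 0")
    case True
    then show ?thesis
    proof
      assume "j = 0"
      then show ?thesis using less.prems by (intro exI[of _ 0] exI[of _ x]) simp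
    next
      assume "k = 0"
      then show ?thesis using less.prems
        by (intro exI[of _ x] exI[of _ 0]) (simp add: linear_0[OF linear_P_funpow])
    qed
  next
    case False
    then obtain j' k' where j: "j = Suc j'" and k: "k = Suc k'"
      by (metis not0_implies_Suc)
    have "\<exists>a b. P x = a + b \<and> (T^^j) a = 0 \<and> (P^^k') b = 0"
      using less.hyps[of j k' "P x"] less.prems k by (simp add: funpow_swap1)
    then obtain a1 b1 where ab1: "P x = a1 + b1" "(T^^j) a1 = 0" "(P^^k') b1 = 0"
      by blast
    have "\<exists>a b. T x = a + b \<and> (T^^j') a = 0 \<and> (P^^k) b = 0"
      using less.hyps[of j' k "T x"] less.prems j
      by (simp add: funpow_Suc_right T_P_funpow_commute del: funpow.simps)
    then obtain a2 b2 where ab2: "T x = a2 + b2" "(T^^j') a2 = 0" "(P^^k) b2 = 0"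
      by blast
    have "(T^^j) a2 = 0"
      using ab2(2) j by (simp add: linear_0[OF linear_T])
    moreover have "(P^^k) b1 = 0"
      using ab1(3) k by (simp add: linear_0[OF linear_P])
    moreover have "x = inverse (2 * \<mu>) *\<^sub>R (P x - T x)"
      using P_minus_T[of x] \<mu>_pos by simp
    ultimately show ?thesis
      using ab1 ab2 by (intro exI[of _ "inverse (2 * \<mu>) *\<^sub>R (a1 - a2)"]
          exI[of _ "inverse (2 * \<mu>) *\<^sub>R (b1 - b2)"])
        (simp add: linear_scale[OF linear_T_funpow] linear_scale[OF linear_P_funpow]
          linear_diff[OF linear_T_funpow] linear_diff[OF linear_P_funpow] algebra_simps)
  qed
qed

lemma kernel_N_funpow_decomp:
  assumes "(N^^s) x = 0"
  shows "\<exists>a b. x = a + \<i> *s b \<and> (T^^s) a = 0 \<and> (T^^s) b = 0"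
proof -
  have "(T^^s) ((P^^s) x) = 0" using assms by (simp add: N_funpow_eq_T_P)
  then obtain a b where ab: "x = a + b" "(T^^s) a = 0" "(P^^s) b = 0"
    using kernel_T_P_split by blast
  have "(T^^s) (\<i> *s - b) = 0"
    using ab(3) by (simp add: T_funpow_mult_i linear_neg[OF linear_T_funpow])
  moreover have "x = a + \<i> *s (\<i> *s - b)" using ab(1) by simp
  ultimately show ?thesis using ab(2) by blast
qed

lemma l_N_swap: "l (N v) w = l v (N w)"
proof -
  have "l v (A (A w)) = cnj (l (A (A w)) v)" by (simp add: l_cnj)
  also have "\<dots> = cnj (l (A v) (A w))" by (simp only: l_A_swap[of "A w" v])
  also have "\<dots> = l (A (A v)) w" by (simp only: l_cnj l_A_swap[of "A v" w])
  finally show ?thesis by (simp add: N_def l_diff_left l_diff_right l_scale_left l_scale_right)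
qed

lemma l_N_funpow_swap: "l ((N^^k) v) w = l v ((N^^k) w)"
proof (induction k arbitrary: w)
  case 0
  then show ?case by simp
next
  case (Suc k)
  have "l ((N^^Suc k) v) w = l ((N^^k) v) (N w)" by (simp add: l_N_swap)
  also have "\<dots> = l v ((N^^k) (N w))" by (rule Suc.IH)
  finally show ?case by (simp add: funpow_swap1)
qed

lemma nondegenerate_on_generalized_eigenspace:
  assumes "nondegenerate_on l UNIV"
  shows "nondegenerate_on l {v. (N^^CARD('n)) v = 0}"
  unfolding nondegenerate_on_def
proof (intro ballI impI)
  let ?g = "N^^CARD('n)"
  fix x assume x: "x \<in> {v. ?g v = 0}" and orth: "\<forall>y\<in>{v. ?g v = 0}. l x y = 0"
  have stable: "?g v = 0" if "?g (?g v) = 0" for v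
    using that kernel_funpow_subset_card[OF linear_N, of "CARD('n) + CARD('n)" v]
    by (simp add: funpow_add)
  have "l x y = 0" for y
  proof -
    obtain y0 z where "y = y0 + ?g z" "?g y0 = 0"
      using fitting_decomposition[OF vec_linear_funpow[OF linear_N] stable] by blast
    then show ?thesis using x orth by (simp add: l_add_right l_N_funpow_swap[symmetric])
  qed
  then show "x = 0" using assms unfolding nondegenerate_on_def by blast
qed

subsection \<open>Moments and their normalization\<close>

definition moment :: "complex^'n \<Rightarrow> nat \<Rightarrow> complex" where
  "moment u k = l ((T^^k) u) u"

lemma top_moment_polarization:
  assumes isotropic: "\<And>a. (T^^s) a = 0 \<Longrightarrow> moment a (s - 1) = 0"
    and a: "(T^^s) a = 0" and c: "(T^^s) c = 0"
  shows "l ((T^^(s - 1)) a) c = 0"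
proof -
  have na: "T_nilpotent a" and nc: "T_nilpotent c" using a c by (auto intro: T_nilpotentI)
  have "l ((T^^(s - 1)) c) a = l c ((T^^(s - 1)) a)" by (rule T_funpow_symmetric[OF nc na])
  also have "\<dots> = l ((T^^(s - 1)) a) c"
    by (rule l_symmetric_on_T_nilpotent[OF nc T_nilpotent_funpow[OF na]])
  finally have swap: "l ((T^^(s - 1)) c) a = l ((T^^(s - 1)) a) c" .
  have "(T^^s) (a + c) = 0" using a c by (simp add: linear_add[OF linear_T_funpow])
  then have "moment (a + c) (s - 1) = 0" by (rule isotropic)
  moreover have "moment (a + c) (s - 1) = moment a (s - 1) + moment c (s - 1)
      + l ((T^^(s - 1)) a) c + l ((T^^(s - 1)) c) a"
    by (simp add: moment_def linear_add[OF linear_T_funpow] l_add_left l_add_right)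
  ultimately have "2 * l ((T^^(s - 1)) a) c = 0"
    using isotropic[OF a] isotropic[OF c] swap by simp
  then show ?thesis by simp
qed

lemma exists_top_moment_nonzero:
  assumes s: "1 \<le> s" and x: "(N^^s) x = 0" and y: "(N^^s) y = 0"
    and pairing: "l ((N^^(s - 1)) x) y \<noteq> 0"
  shows "\<exists>a. (T^^s) a = 0 \<and> moment a (s - 1) \<noteq> 0"
proof (rule ccontr)
  assume "\<not> ?thesis"
  then have vanish: "l ((T^^(s - 1)) a) c = 0" if "(T^^s) a = 0" "(T^^s) c = 0" for a c
    using top_moment_polarization that by blast
  obtain a b where ab: "x = a + \<i> *s b" "(T^^s) a = 0" "(T^^s) b = 0"
    using kernel_N_funpow_decomp[OF x] by blast
  obtain c d where cd: "y = c + \<i> *s d" "(T^^s) c = 0" "(T^^s) d = 0"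
    using kernel_N_funpow_decomp[OF y] by blast
  have "(N^^(s - 1)) x = ((2 * \<mu>) ^ (s - 1)) *\<^sub>R (T^^(s - 1)) a
      + \<i> *s ((2 * \<mu>) ^ (s - 1)) *\<^sub>R (T^^(s - 1)) b"
    using N_funpow_on_kernel_T[OF ab(2) s] N_funpow_on_kernel_T[OF ab(3) s] ab(1)
    by (simp add: vec.linear_add[OF vec_linear_funpow[OF linear_N]]
        vec.linear_scale[OF vec_linear_funpow[OF linear_N]])
  then have "l ((N^^(s - 1)) x) y = 0"
    using vanish[of a c] vanish[of a d] vanish[of b c] vanish[of b d] ab cd
    by (simp add: l_add_left l_add_right l_scale_left l_scale_right l_scaleR_left)
  with pairing show False by contradiction
qed

lemma moment_real:
  assumes "T_nilpotent u"
  shows "moment u k = of_real (Re (moment u k))"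
proof -
  have "l ((T^^k) u) u = l u ((T^^k) u)"
    by (rule l_symmetric_on_T_nilpotent[OF T_nilpotent_funpow[OF assms] assms])
  then have "moment u k = cnj (moment u k)" by (simp add: moment_def l_cnj)
  then show ?thesis by (simp add: complex_eq_iff)
qed

lemma moment_eq_0_beyond: "(T^^s) u = 0 \<Longrightarrow> s \<le> k \<Longrightarrow> moment u k = 0"
  unfolding moment_def using funpow_kernel_mono[of T, OF linear_0[OF linear_T]] by simp

lemma moment_shift:
  assumes u: "T_nilpotent u"
  shows "moment (u + r *\<^sub>R (T^^D) u) k
       = moment u k + of_real (2 * r) * moment u (k + D) + of_real (r\<^sup>2) * moment u (k + 2 * D)"
proof -
  have shift: "l ((T^^j) u) ((T^^D) u) = moment u (j + D)" for j
    using T_funpow_symmetric[OF T_nilpotent_funpow[OF u, of j] u, of D]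
    by (simp add: moment_def funpow_add add.commute)
  have comp: "(T^^k) ((T^^D) u) = (T^^(k + D)) u" by (simp add: funpow_add)
  have "moment (u + r *\<^sub>R (T^^D) u) k = l ((T^^k) u) u + of_real r * l ((T^^k) u) ((T^^D) u)
      + of_real r * l ((T^^(k + D)) u) u + of_real r * of_real r * l ((T^^(k + D)) u) ((T^^D) u)"
    by (simp add: moment_def linear_add[OF linear_T_funpow] linear_scale[OF linear_T_funpow]
        comp l_add_left l_add_right l_scaleR_left l_scaleR_right algebra_simps)
  also have "\<dots> = moment u k + of_real (2 * r) * moment u (k + D) + of_real (r\<^sup>2) * moment u (k + D + D)"
    using shift[of k] shift[of "k + D"] by (simp add: moment_def algebra_simps power2_eq_square)
  also have "k + D + D = k + 2 * D" by simp
  finally show ?thesis .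
qed

lemma kernel_T_shear:
  assumes "(T^^s) u = 0"
  shows "(T^^s) (u + r *\<^sub>R (T^^D) u) = 0"
proof -
  have "(T^^s) ((T^^D) u) = (T^^D) ((T^^s) u)" by (rule funpow_commute) (rule refl)
  then show ?thesis
    using assms by (simp add: linear_add[OF linear_T_funpow] linear_scale[OF linear_T_funpow]
        linear_0[OF linear_T_funpow])
qed

lemma moment_shear_unchanged:
  assumes u: "(T^^s) u = 0" and "d < D" and "d < s"
  shows "moment (u + r *\<^sub>R (T^^D) u) (s - 1 - d) = moment u (s - 1 - d)"
  using moment_shift[OF T_nilpotentI[OF u]] moment_eq_0_beyond[OF u, of "s - 1 - d + D"]
    moment_eq_0_beyond[OF u, of "s - 1 - d + 2 * D"] assms(2,3)
  by simp

lemma moment_shear_cancel: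
  assumes u: "(T^^s) u = 0" and D: "0 < D" "D < s" and top: "moment u (s - 1) \<noteq> 0"
  defines "r \<equiv> - Re (moment u (s - 1 - D)) / (2 * Re (moment u (s - 1)))"
  shows "moment (u + r *\<^sub>R (T^^D) u) (s - 1 - D) = 0"
proof -
  have nu: "T_nilpotent u" using u by (rule T_nilpotentI)
  define \<gamma> where "\<gamma> = Re (moment u (s - 1))"
  define \<beta> where "\<beta> = Re (moment u (s - 1 - D))"
  have \<gamma>: "moment u (s - 1) = of_real \<gamma>" and \<beta>: "moment u (s - 1 - D) = of_real \<beta>"
    unfolding \<gamma>_def \<beta>_def by (rule moment_real[OF nu])+
  have "\<gamma> \<noteq> 0" using \<gamma> top by auto
  txt \<open>Moments of index at least s vanish, so only \<beta> + 2 r \<gamma> survives.\<close>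
  have "moment (u + r *\<^sub>R (T^^D) u) (s - 1 - D) = of_real (\<beta> + 2 * r * \<gamma>)"
    using moment_shift[OF nu, of r D "s - 1 - D"] moment_eq_0_beyond[OF u, of "s - 1 - D + 2 * D"]
      D \<beta> \<gamma>
    by simp
  also have "\<beta> + 2 * r * \<gamma> = 0" using \<open>\<gamma> \<noteq> 0\<close> by (simp add: r_def \<gamma>_def \<beta>_def)
  finally show ?thesis by simp
qed

lemma exists_moments_vanishing_below_top:
  assumes a: "(T^^s) a = 0" "moment a (s - 1) \<noteq> 0" and "D \<le> s"
  shows "\<exists>u. (T^^s) u = 0 \<and> moment u (s - 1) = moment a (s - 1)
           \<and> (\<forall>d. 0 < d \<and> d < D \<longrightarrow> moment u (s - 1 - d) = 0)"
  using \<open>D \<le> s\<close>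
proof (induction D)
  case 0
  then show ?case using a(1) by blast
next
  case (Suc D)
  then obtain u where u: "(T^^s) u = 0" "moment u (s - 1) = moment a (s - 1)"
      "\<forall>d. 0 < d \<and> d < D \<longrightarrow> moment u (s - 1 - d) = 0"
    by auto
  show ?case
  proof (cases "D = 0")
    case True
    then show ?thesis using u by auto
  next
    case False
    define r where "r = - Re (moment u (s - 1 - D)) / (2 * Re (moment u (s - 1)))"
    have "moment u (s - 1) \<noteq> 0" using u(2) a(2) by simp
    then have "moment (u + r *\<^sub>R (T^^D) u) (s - 1 - D) = 0"
      using moment_shear_cancel[OF u(1)] False Suc.prems unfolding r_def by simp
    moreover have "moment (u + r *\<^sub>R (T^^D) u) (s - 1 - d) = moment u (s - 1 - d)"
      if "d < D" for d
      using moment_shear_unchanged[OF u(1) that] that Suc.prems by simp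
    ultimately show ?thesis
      using kernel_T_shear[OF u(1)] u False
      by (intro exI[of _ "u + r *\<^sub>R (T^^D) u"]) (auto simp: less_Suc_eq)
  qed
qed

lemma moment_scaleR: "moment (\<rho> *\<^sub>R u) k = of_real (\<rho> * \<rho>) * moment u k"
  by (simp add: moment_def linear_scale[OF linear_T_funpow] l_scaleR_left l_scaleR_right)

lemma exists_normalized_moments:
  assumes a: "(T^^s) a = 0" "moment a (s - 1) \<noteq> 0"
  shows "\<exists>u \<sigma>. (T^^s) u = 0 \<and> (\<sigma> = 1 \<or> \<sigma> = -1) \<and> (\<forall>k. moment u k = (if k = s - 1 then \<sigma> else 0))"
proof -
  obtain u where u: "(T^^s) u = 0" "moment u (s - 1) = moment a (s - 1)"
      "\<forall>d. 0 < d \<and> d < s \<longrightarrow> moment u (s - 1 - d) = 0"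
    using exists_moments_vanishing_below_top[OF a order_refl] by blast
  define \<gamma> where "\<gamma> = Re (moment u (s - 1))"
  have \<gamma>: "moment u (s - 1) = of_real \<gamma>"
    using moment_real[OF T_nilpotentI[OF u(1)]] unfolding \<gamma>_def by blast
  have "\<gamma> \<noteq> 0" using \<gamma> u(2) a(2) by auto
  define \<sigma> where "\<sigma> = (if 0 < \<gamma> then 1 else -1 :: complex)"
  define \<rho> where "\<rho> = 1 / sqrt \<bar>\<gamma>\<bar>"
  define v where "v = \<rho> *\<^sub>R u"
  have \<rho>: "\<rho> * \<rho> = 1 / \<bar>\<gamma>\<bar>" by (simp add: \<rho>_def real_sqrt_mult_self)
  show ?thesis
  proof (intro exI[of _ v] exI[of _ \<sigma>] conjI allI)
    show "(T^^s) v = 0" using u(1) by (simp add: v_def linear_scale[OF linear_T_funpow])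
    show "\<sigma> = 1 \<or> \<sigma> = -1" by (simp add: \<sigma>_def)
    fix k
    show "moment v k = (if k = s - 1 then \<sigma> else 0)"
    proof (cases "k = s - 1")
      case True
      then show ?thesis using \<gamma> \<open>\<gamma> \<noteq> 0\<close> by (simp add: v_def moment_scaleR \<rho> \<sigma>_def)
    next
      case False
      have "moment u k = 0"
      proof (cases "k < s - 1")
        case True
        then show ?thesis using u(3)[rule_format, of "s - 1 - k"] by simp
      next
        case False
        then show ?thesis using \<open>k \<noteq> s - 1\<close> moment_eq_0_beyond[OF u(1)] by simp
      qed
      then show ?thesis using False by (simp add: v_def moment_scaleR)
    qed
  qed
qed

lemma exists_normalized_generator:
  assumes nondeg: "nondegenerate_on l UNIV" and s: "1 \<le> s"
    and stable: "\<And>x. (N^^s) x = 0 \<longleftrightarrow> (N^^CARD('n)) x = 0"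
    and w: "(N^^s) w = 0" "(N^^(s - 1)) w \<noteq> 0"
  shows "\<exists>u \<sigma>. (T^^s) u = 0 \<and> (\<sigma> = 1 \<or> \<sigma> = -1) \<and> (\<forall>k. moment u k = (if k = s - 1 then \<sigma> else 0))"
proof -
  have "(N^^s) ((N^^(s - 1)) w) = (N^^(s - 1)) ((N^^s) w)" by (rule funpow_commute) (rule refl)
  then have "(N^^CARD('n)) ((N^^(s - 1)) w) = 0"
    using w(1) stable by (simp add: vec.linear_0[OF vec_linear_funpow[OF linear_N]])
  then obtain y where "(N^^s) y = 0" "l ((N^^(s - 1)) w) y \<noteq> 0"
    using nondegenerate_on_generalized_eigenspace[OF nondeg] w(2) stable
    unfolding nondegenerate_on_def by blast
  then obtain a where "(T^^s) a = 0" "moment a (s - 1) \<noteq> 0"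
    using exists_top_moment_nonzero[OF s w(1)] by blast
  then show ?thesis using exists_normalized_moments by blast
qed

end

section \<open>The normalized chain\<close>

locale normalized_chain = antilinear_self_adjoint l A \<mu>
  for l :: "complex^'n \<Rightarrow> complex^'n \<Rightarrow> complex" and A and \<mu> +
  fixes s :: nat and u :: "complex^'n" and \<sigma> :: complex
  assumes kernel_T: "(T^^s) u = 0"
    and sign: "\<sigma> = 1 \<or> \<sigma> = -1"
    and moments: "\<And>k. moment u k = (if k = s - 1 then \<sigma> else 0)"
begin

definition chain :: "nat \<Rightarrow> complex^'n" where
  "chain i = (T^^(s - i)) u"

lemma chain_gram:
  assumes "i \<in> {1..s}" and "j \<in> {1..s}"
  shows "l (chain j) (chain i) = \<sigma> * S_mat s i j"
proof -
  have nu: "T_nilpotent u" using kernel_T by (rule T_nilpotentI)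
  have "l (chain j) (chain i) = l ((T^^(s - i)) (chain j)) u"
    unfolding chain_def by (rule T_funpow_symmetric[OF T_nilpotent_funpow[OF nu] nu, symmetric])
  also have "\<dots> = moment u ((s - i) + (s - j))" by (simp add: chain_def moment_def funpow_add)
  also have "\<dots> = \<sigma> * S_mat s i j" using assms by (auto simp: moments S_mat_def)
  finally show ?thesis .
qed

lemma l_sum_chain:
  assumes j: "j \<in> {1..s}"
  shows "l (\<Sum>i=1..s. c i *s chain i) (chain j) = \<sigma> * c (s + 1 - j)"
proof -
  have "l (\<Sum>i=1..s. c i *s chain i) (chain j) = (\<Sum>i=1..s. c i * l (chain i) (chain j))"
    by (simp add: l_sum_left)
  also have "\<dots> = (\<Sum>i=1..s. if i = s + 1 - j then \<sigma> * c i else 0)"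
    using j by (intro sum.cong) (auto simp: chain_gram S_mat_def)
  also have "\<dots> = \<sigma> * c (s + 1 - j)"
  proof -
    have "s + 1 - j \<in> {1..s}" using j by auto
    then show ?thesis by (simp only: sum.delta[OF finite_atLeastAtMost] if_True)
  qed
  finally show ?thesis .
qed

lemma sign_nonzero: "\<sigma> \<noteq> 0"
  using sign by auto

lemma cindependent_chain: "cindependent_list s chain"
  unfolding cindependent_list_def
proof (intro allI impI ballI)
  fix c i assume zero: "(\<Sum>i=1..s. c i *s chain i) = 0" and i: "i \<in> {1..s}"
  have "s + 1 - i \<in> {1..s}" using i by auto
  then have "\<sigma> * c (s + 1 - (s + 1 - i)) = 0"
    using l_sum_chain[of "s + 1 - i" c] zero by simp
  then show "c i = 0" using i sign_nonzero by simp
qed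

lemma nondegenerate_on_cspan_chain: "nondegenerate_on l (cspan_list s chain)"
  unfolding nondegenerate_on_def
proof (intro ballI impI)
  fix v assume "v \<in> cspan_list s chain" and orth: "\<forall>w\<in>cspan_list s chain. l v w = 0"
  then obtain c where v: "v = (\<Sum>i=1..s. c i *s chain i)" unfolding cspan_list_def by blast
  have "c i = 0" if i: "i \<in> {1..s}" for i
  proof -
    have "s + 1 - i \<in> {1..s}" using i by auto
    then have "\<sigma> * c (s + 1 - (s + 1 - i)) = 0"
      using l_sum_chain orth cspan_list_mem v by metis
    then show ?thesis using i sign_nonzero by simp
  qed
  then show "v = 0" by (simp add: v)
qed

lemma T_chain:
  assumes "i \<in> {1..s}"
  shows "T (chain i) = (if i = 1 then 0 else chain (i - 1))"
proof -
  have "T (chain i) = (T^^Suc (s - i)) u" by (simp add: chain_def)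
  also have "Suc (s - i) = s - (i - 1)" using assms by auto
  finally show ?thesis using kernel_T by (simp add: chain_def)
qed

lemma A_chain:
  assumes "i \<in> {1..s}"
  shows "A (chain i) = (\<Sum>m=1..s. J_mat (of_real \<mu>) s m i *s chain m)"
proof -
  have "A (chain i) = of_real \<mu> *s chain i + T (chain i)"
    by (simp add: T_def scaleR_vec_eq_scale)
  also have "\<dots> = (\<Sum>m=1..s. J_mat (of_real \<mu>) s m i *s chain m)"
    by (simp only: T_chain[OF assms] sum_J_mat_column[OF assms])
  finally show ?thesis .
qed

lemma cspan_chain_subset_kernel_N: "cspan_list s chain \<subseteq> {v. (N^^s) v = 0}"
proof
  fix v assume "v \<in> cspan_list s chain"
  then obtain c where v: "v = (\<Sum>i=1..s. c i *s chain i)" unfolding cspan_list_def by blast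
  have "(T^^s) (chain i) = (T^^(s - i)) ((T^^s) u)" for i
    unfolding chain_def by (rule funpow_commute) (rule refl)
  then have "(T^^s) (chain i) = 0" for i by (simp add: kernel_T linear_0[OF linear_T_funpow])
  then have "(N^^s) (chain i) = 0" for i
    by (simp add: N_funpow_eq_P_T linear_0[OF linear_P_funpow])
  then show "v \<in> {v. (N^^s) v = 0}"
    by (simp add: v vec.linear_sum[OF vec_linear_funpow[OF linear_N]]
        vec.linear_scale[OF vec_linear_funpow[OF linear_N]])
qed

lemma A_image_cspan_chain: "A ` cspan_list s chain \<subseteq> cspan_list s chain"
proof
  fix x assume "x \<in> A ` cspan_list s chain"
  then obtain c where "x = A (\<Sum>i=1..s. c i *s chain i)" unfolding cspan_list_def by blast
  then have "x = (\<Sum>i=1..s. cnj (c i) *s (\<Sum>m=1..s. J_mat (of_real \<mu>) s m i *s chain m))"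
    by (simp add: A_sum A_chain)
  then show "x \<in> cspan_list s chain" using cspan_list_matrix_combination by simp
qed

end

theorem mainTheorem10:
  fixes l :: "complex^'n \<Rightarrow> complex^'n \<Rightarrow> complex"
    and A :: "complex^'n \<Rightarrow> complex^'n"
    and lam :: real
  assumes herm: "hermitian_form l"
    and nondeg: "nondegenerate_on l UNIV"
    and anti: "antilinear A"
    and sa: "l_self_adjoint l A"
    and pos: "lam\<^sup>2 > 0"
    and eig: "\<exists>v. v \<noteq> 0 \<and> A (A v) = complex_of_real (lam\<^sup>2) *s v"
  defines "s1 \<equiv> (LEAST s. s > 0 \<and> gen_ker A (complex_of_real (lam\<^sup>2)) s
                                   = gen_ker A (complex_of_real (lam\<^sup>2)) CARD('n))"
  shows "\<exists>V e (\<sigma>::complex).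
           cindependent_list s1 e \<and> V = cspan_list s1 e \<and>
           V \<subseteq> gen_ker A (complex_of_real (lam\<^sup>2)) CARD('n) \<and>
           A ` V \<subseteq> V \<and>
           nondegenerate_on l V \<and>
           (\<sigma> = 1 \<or> \<sigma> = -1) \<and>
           (\<forall>i\<in>{1..s1}. \<forall>j\<in>{1..s1}. l (e j) (e i) = \<sigma> * S_mat s1 i j) \<and>
           (\<forall>i\<in>{1..s1}. A (e i) = (\<Sum>m=1..s1. J_mat (complex_of_real \<bar>lam\<bar>) s1 m i *s e m))"
proof -
  define \<mu> where "\<mu> = \<bar>lam\<bar>"
  have lam_sq: "lam\<^sup>2 = \<mu>\<^sup>2" by (simp add: \<mu>_def)
  have "0 < \<mu>" using pos by (simp add: \<mu>_def)
  interpret antilinear_self_adjoint l A \<mu>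
    using herm anti sa \<open>0 < \<mu>\<close> by unfold_locales
  note kernel_eq = gen_ker_eq_kernel_N[folded lam_sq]
  obtain v where "N v = 0" "v \<noteq> 0" using eig by (auto simp: N_def lam_sq)
  note s1 = least_stable_kernel_index[OF linear_N this, folded kernel_eq, folded s1_def]
  have "1 \<le> s1" using s1(1) by simp
  obtain w where "(N^^s1) w = 0" "(N^^(s1 - 1)) w \<noteq> 0" using s1(3) by blast
  then obtain u \<sigma> where "(T^^s1) u = 0" "\<sigma> = 1 \<or> \<sigma> = -1"
      "\<forall>k. moment u k = (if k = s1 - 1 then \<sigma> else 0)"
    using exists_normalized_generator[OF nondeg \<open>1 \<le> s1\<close> s1(2)] by blast
  then interpret chain: normalized_chain l A \<mu> s1 u \<sigma>
    by unfold_locales auto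
  have "cspan_list s1 chain.chain \<subseteq> gen_ker A (complex_of_real (lam\<^sup>2)) CARD('n)"
    unfolding kernel_eq using chain.cspan_chain_subset_kernel_N s1(2) by auto
  then show ?thesis
    using chain.cindependent_chain chain.A_image_cspan_chain chain.nondegenerate_on_cspan_chain
      chain.chain_gram chain.A_chain chain.sign
    by (intro exI[of _ "cspan_list s1 chain.chain"] exI[of _ chain.chain] exI[of _ \<sigma>])
      (simp add: \<mu>_def)
qed

end
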